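(* There exists an infinite family of digraphs $\{X_j\}_{j=1}^{\infty}$ such that the diameter of $\Gamma(X_j)$ tends to $\infty$ as $j\to\infty$, while each $H(X_j)$ has exactly three distinct eigenvalues.
   Context: A digraph $X$ has a finite vertex set and an arc set of ordered pairs of distinct vertices. The underlying graph $\Gamma(X)$ is the simple graph with an edge $\{x,y\}$ whenever $xy$ or $yx$ is an arc. The Hermitian adjacency matrix $H(X)$ has $(u,v)$-entry $1$ if $uv$ and $vu$ are arcs, $i$ if only $uv$ is an arc, $-i$ if only $vu$ is an arc, and $0$ otherwise. *)

theory Defs
  imports Complex_Main "Jordan_Normal_Form.Char_Poly"
begin

definition is_digraph :: "nat \<Rightarrow> (nat \<times> nat) set \<Rightarrow> bool" where
  "is_digraph n A \<longleftrightarrow> A \<subseteq> {0..<n} \<times> {0..<n} \<and> (\<forall>x. (x, x) \<notin> A)"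

definition underlying_edges :: "(nat \<times> nat) set \<Rightarrow> (nat \<times> nat) set" where
  "underlying_edges A = {(x, y). (x, y) \<in> A \<or> (y, x) \<in> A}"

definition und_connected :: "nat \<Rightarrow> (nat \<times> nat) set \<Rightarrow> bool" where
  "und_connected n A \<longleftrightarrow> (\<forall>x<n. \<forall>y<n. \<exists>k. (x, y) \<in> underlying_edges A ^^ k)"

definition und_dist :: "(nat \<times> nat) set \<Rightarrow> nat \<Rightarrow> nat \<Rightarrow> nat" where
  "und_dist A x y = (LEAST k. (x, y) \<in> underlying_edges A ^^ k)"

definition und_diameter :: "nat \<Rightarrow> (nat \<times> nat) set \<Rightarrow> nat" where
  "und_diameter n A = Max {und_dist A x y | x y. x < n \<and> y < n}"

definition hermitian_adj :: "nat \<Rightarrow> (nat \<times> nat) set \<Rightarrow> complex mat" where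
  "hermitian_adj n A = mat n n (\<lambda>(u, v).
     if (u, v) \<in> A \<and> (v, u) \<in> A then 1
     else if (u, v) \<in> A then \<i>
     else if (v, u) \<in> A then - \<i>
     else 0)"

end

theory Submission
  imports Defs
begin

text \<open>Build Hermitian \<open>{0, \<plusminus>\<i>}\<close>-matrices \<open>A\<^sub>n, B\<^sub>n\<close> of size \<open>2\<^sup>n\<close> by doubling, so that they
  commute and \<open>A\<^sub>n\<^sup>2 = \<lfloor>n/2\<rfloor> I\<close>, \<open>B\<^sub>n\<^sup>2 = \<lceil>n/2\<rceil> I\<close>. For even \<open>n\<close> the sum \<open>H = A\<^sub>n + B\<^sub>n\<close> then satisfies
  \<open>H\<^sup>3 = 2n H\<close>, so its spectrum is \<open>{0, \<plusminus>\<surd>(2n)}\<close>, and all three values occur. \<open>H\<close> is the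
  Hermitian adjacency matrix of an orientation of the hypercube \<open>Q\<^sub>n\<close>: every edge joins vertices
  whose Hamming weights differ by one, so the diameter is at least \<open>n\<close>.\<close>

lemma smult_one_mat_mult_smult_one_mat:
  "(a::'a::comm_ring_1) \<cdot>\<^sub>m 1\<^sub>m n * (b \<cdot>\<^sub>m 1\<^sub>m n) = (a * b) \<cdot>\<^sub>m 1\<^sub>m n"
  by (rule eq_matI) (auto simp: mult_smult_distrib mult_smult_assoc_mat)

lemma mult_smult_one_mat:
  "P \<in> carrier_mat n n \<Longrightarrow> P * ((a::'a::comm_ring_1) \<cdot>\<^sub>m 1\<^sub>m n) = a \<cdot>\<^sub>m P"
  by (subst mult_smult_distrib[of _ n n _ n]) auto

lemma smult_one_mat_mult:
  "P \<in> carrier_mat n n \<Longrightarrow> ((a::'a::comm_ring_1) \<cdot>\<^sub>m 1\<^sub>m n) * P = a \<cdot>\<^sub>m P"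
  by (subst mult_smult_assoc_mat[of _ n n _ n]) auto

lemma four_block_smult_one_mat:
  "four_block_mat (c \<cdot>\<^sub>m 1\<^sub>m n) (0\<^sub>m n n) (0\<^sub>m n n) (c \<cdot>\<^sub>m 1\<^sub>m n) = (c::'a::comm_ring_1) \<cdot>\<^sub>m 1\<^sub>m (n + n)"
  by (rule eq_matI) auto

lemma index_four_block_square:
  assumes "X \<in> carrier_mat n n" "W \<in> carrier_mat n n" "u < n + n" "v < n + n"
  shows "four_block_mat X Y Z W $$ (u, v) = (if u < n then if v < n then X $$ (u, v) else Y $$ (u, v - n)
    else if v < n then Z $$ (u - n, v) else W $$ (u - n, v - n))"
  using assms by simp

definition double_twist :: "nat \<Rightarrow> complex mat \<Rightarrow> complex mat" where
  "double_twist n P = four_block_mat P (\<i> \<cdot>\<^sub>m 1\<^sub>m n) ((- \<i>) \<cdot>\<^sub>m 1\<^sub>m n) (- P)"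

definition double_diag :: "nat \<Rightarrow> complex mat \<Rightarrow> complex mat" where
  "double_diag n Q = four_block_mat Q (0\<^sub>m n n) (0\<^sub>m n n) Q"

lemma double_twist_carrier [simp]:
  "P \<in> carrier_mat n n \<Longrightarrow> double_twist n P \<in> carrier_mat (n + n) (n + n)"
  unfolding double_twist_def by auto

lemma double_diag_carrier [simp]:
  "Q \<in> carrier_mat n n \<Longrightarrow> double_diag n Q \<in> carrier_mat (n + n) (n + n)"
  unfolding double_diag_def by auto

lemma double_twist_square:
  assumes P: "P \<in> carrier_mat n n" and PP: "P * P = p \<cdot>\<^sub>m 1\<^sub>m n"
  shows "double_twist n P * double_twist n P = (p + 1) \<cdot>\<^sub>m 1\<^sub>m (n + n)"
proof -
  have "double_twist n P * double_twist n P =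
      four_block_mat (P * P + (\<i> \<cdot>\<^sub>m 1\<^sub>m n) * ((- \<i>) \<cdot>\<^sub>m 1\<^sub>m n))
        (P * (\<i> \<cdot>\<^sub>m 1\<^sub>m n) + (\<i> \<cdot>\<^sub>m 1\<^sub>m n) * (- P))
        (((- \<i>) \<cdot>\<^sub>m 1\<^sub>m n) * P + (- P) * ((- \<i>) \<cdot>\<^sub>m 1\<^sub>m n))
        (((- \<i>) \<cdot>\<^sub>m 1\<^sub>m n) * (\<i> \<cdot>\<^sub>m 1\<^sub>m n) + (- P) * (- P))"
    unfolding double_twist_def by (rule mult_four_block_mat) (use P in auto)
  also have "\<dots> = four_block_mat ((p + 1) \<cdot>\<^sub>m 1\<^sub>m n) (0\<^sub>m n n) (0\<^sub>m n n) ((p + 1) \<cdot>\<^sub>m 1\<^sub>m n)"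
    using P PP by (intro cong_four_block_mat)
      (auto simp: smult_one_mat_mult_smult_one_mat mult_smult_one_mat smult_one_mat_mult)
  finally show ?thesis by (simp add: four_block_smult_one_mat)
qed

lemma double_diag_square:
  assumes Q: "Q \<in> carrier_mat n n" and QQ: "Q * Q = q \<cdot>\<^sub>m 1\<^sub>m n"
  shows "double_diag n Q * double_diag n Q = q \<cdot>\<^sub>m 1\<^sub>m (n + n)"
proof -
  have "double_diag n Q * double_diag n Q =
      four_block_mat (Q * Q + 0\<^sub>m n n * 0\<^sub>m n n) (Q * 0\<^sub>m n n + 0\<^sub>m n n * Q)
        (0\<^sub>m n n * Q + Q * 0\<^sub>m n n) (0\<^sub>m n n * 0\<^sub>m n n + Q * Q)"
    unfolding double_diag_def by (rule mult_four_block_mat) (use Q in auto)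
  also have "\<dots> = four_block_mat (q \<cdot>\<^sub>m 1\<^sub>m n) (0\<^sub>m n n) (0\<^sub>m n n) (q \<cdot>\<^sub>m 1\<^sub>m n)"
    using Q QQ by (intro cong_four_block_mat) auto
  finally show ?thesis by (simp add: four_block_smult_one_mat)
qed

lemma double_diag_mult_double_twist:
  assumes P: "P \<in> carrier_mat n n" and Q: "Q \<in> carrier_mat n n"
  shows "double_diag n Q * double_twist n P
    = four_block_mat (Q * P) (\<i> \<cdot>\<^sub>m Q) ((- \<i>) \<cdot>\<^sub>m Q) (- (Q * P))"
proof -
  have "double_diag n Q * double_twist n P =
      four_block_mat (Q * P + 0\<^sub>m n n * ((- \<i>) \<cdot>\<^sub>m 1\<^sub>m n))
        (Q * (\<i> \<cdot>\<^sub>m 1\<^sub>m n) + 0\<^sub>m n n * (- P))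
        (0\<^sub>m n n * P + Q * ((- \<i>) \<cdot>\<^sub>m 1\<^sub>m n))
        (0\<^sub>m n n * (\<i> \<cdot>\<^sub>m 1\<^sub>m n) + Q * (- P))"
    unfolding double_diag_def double_twist_def by (rule mult_four_block_mat) (use P Q in auto)
  also have "\<dots> = four_block_mat (Q * P) (\<i> \<cdot>\<^sub>m Q) ((- \<i>) \<cdot>\<^sub>m Q) (- (Q * P))"
    using P Q by (intro cong_four_block_mat) (auto simp: mult_smult_one_mat)
  finally show ?thesis .
qed

lemma double_twist_mult_double_diag:
  assumes P: "P \<in> carrier_mat n n" and Q: "Q \<in> carrier_mat n n"
  shows "double_twist n P * double_diag n Q
    = four_block_mat (P * Q) (\<i> \<cdot>\<^sub>m Q) ((- \<i>) \<cdot>\<^sub>m Q) (- (P * Q))"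
proof -
  have "double_twist n P * double_diag n Q =
      four_block_mat (P * Q + (\<i> \<cdot>\<^sub>m 1\<^sub>m n) * 0\<^sub>m n n)
        (P * 0\<^sub>m n n + (\<i> \<cdot>\<^sub>m 1\<^sub>m n) * Q)
        (((- \<i>) \<cdot>\<^sub>m 1\<^sub>m n) * Q + (- P) * 0\<^sub>m n n)
        (((- \<i>) \<cdot>\<^sub>m 1\<^sub>m n) * 0\<^sub>m n n + (- P) * Q)"
    unfolding double_diag_def double_twist_def by (rule mult_four_block_mat) (use P Q in auto)
  also have "\<dots> = four_block_mat (P * Q) (\<i> \<cdot>\<^sub>m Q) ((- \<i>) \<cdot>\<^sub>m Q) (- (P * Q))"
    using P Q by (intro cong_four_block_mat) (auto simp: smult_one_mat_mult)
  finally show ?thesis .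
qed

section \<open>Matrices with \<open>H\<^sup>3 = s\<^sup>2 H\<close>\<close>

lemma eigenvalue_if_mult_eq_smult:
  fixes A M :: "'a::comm_ring_1 mat"
  assumes A: "A \<in> carrier_mat n n" and M: "M \<in> carrier_mat n m"
    and AM: "A * M = k \<cdot>\<^sub>m M" and j: "j < m" and nz: "col M j \<noteq> 0\<^sub>v n"
  shows "eigenvalue A k"
  unfolding eigenvalue_def eigenvector_def
proof (intro exI conjI)
  show "col M j \<in> carrier_vec (dim_row A)" using A M j by simp
  show "col M j \<noteq> 0\<^sub>v (dim_row A)" using A nz by simp
  have "A *\<^sub>v col M j = col (A * M) j" by (rule col_mult2[OF A M j, symmetric])
  also have "\<dots> = k \<cdot>\<^sub>v col M j" unfolding AM using M j by simp
  finally show "A *\<^sub>v col M j = k \<cdot>\<^sub>v col M j" .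
qed

lemma smult_mat_mult_vec:
  "A \<in> carrier_mat nr nc \<Longrightarrow> v \<in> carrier_vec nc \<Longrightarrow> (k \<cdot>\<^sub>m A) *\<^sub>v v = (k::'a::comm_ring) \<cdot>\<^sub>v (A *\<^sub>v v)"
  by (intro eq_vecI) auto

lemma eigenvalue_cubic:
  fixes A :: "'a::field mat"
  assumes A: "A \<in> carrier_mat n n" and A3: "A * (A * A) = c \<cdot>\<^sub>m A" and ev: "eigenvalue A k"
  shows "k * (k * k) = c * k"
proof -
  obtain v where v: "v \<in> carrier_vec n" "v \<noteq> 0\<^sub>v n" "A *\<^sub>v v = k \<cdot>\<^sub>v v"
    using ev A unfolding eigenvalue_def eigenvector_def by auto
  have Akv: "A *\<^sub>v (a \<cdot>\<^sub>v v) = (a * k) \<cdot>\<^sub>v v" for a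
    using A v(1,3) by (simp add: mult_mat_vec smult_smult_assoc mult.commute)
  have "(k * (k * k)) \<cdot>\<^sub>v v = A *\<^sub>v (A *\<^sub>v (A *\<^sub>v v))"
    using Akv[of k] Akv[of "k * k"] v(3) by (simp add: mult.commute)
  also have "\<dots> = (A * (A * A)) *\<^sub>v v"
    using A v by (simp add: assoc_mult_mat_vec[of _ n n _ n])
  also have "\<dots> = (c * k) \<cdot>\<^sub>v v"
    unfolding A3 using A v by (simp add: smult_mat_mult_vec smult_smult_assoc)
  finally have "(k * (k * k)) \<cdot>\<^sub>v v = (c * k) \<cdot>\<^sub>v v" .
  moreover obtain i where "i < n" "v $ i \<noteq> 0"
    using v(1,2) by (metis eq_vecI carrier_vecD index_zero_vec)
  ultimately show ?thesis
    using v(1) by (metis carrier_vecD index_smult_vec(1) mult_cancel_right)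
qed

lemma eigenvalues_of_cubic:
  fixes H :: "'a::field mat"
  assumes H: "H \<in> carrier_mat n n" and n: "0 < n"
    and H3: "H * (H * H) = (s * s) \<cdot>\<^sub>m H"
    and H00: "H $$ (0, 0) = 0" and HH00: "(H * H) $$ (0, 0) \<notin> {0, s * s}"
  shows "{k. eigenvalue H k} = {0, s, - s}"
proof (intro equalityI subsetI)
  fix k assume "k \<in> {k. eigenvalue H k}"
  then have "k * (k * k) = (s * s) * k" using eigenvalue_cubic[OF H H3] by simp
  then have "k = 0 \<or> k * k = s * s" by auto
  then show "k \<in> {0, s, - s}" using square_eq_iff[of k s] by (auto simp: power2_eq_square)
next
  fix k assume k: "k \<in> {0, s, - s}"
  txt \<open>The columns of \<open>H\<^sup>2 + k H + (k\<^sup>2 - s\<^sup>2) I\<close> are \<open>k\<close>-eigenvectors; the \<open>(0, 0)\<close> entry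
    shows that the first one is nonzero.\<close>
  define M where "M = H * H + k \<cdot>\<^sub>m H + (k * k - s * s) \<cdot>\<^sub>m 1\<^sub>m n"
  have HH: "H * H \<in> carrier_mat n n" using H by simp
  have M: "M \<in> carrier_mat n n" unfolding M_def using H by simp
  have "H * M = H * (H * H) + H * (k \<cdot>\<^sub>m H) + H * ((k * k - s * s) \<cdot>\<^sub>m 1\<^sub>m n)"
    unfolding M_def using H HH by (simp add: mult_add_distrib_mat[of H n n _ n])
  also have "\<dots> = k \<cdot>\<^sub>m M"
    unfolding H3 M_def using H HH k
    by (intro eq_matI) (auto simp: mult_smult_one_mat mult_smult_distrib[of _ n n _ n] algebra_simps)
  finally have "H * M = k \<cdot>\<^sub>m M" .
  moreover have "col M 0 $ 0 = (H * H) $$ (0, 0) + k * k - s * s"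
    unfolding M_def using H HH n H00 by simp
  then have "col M 0 \<noteq> 0\<^sub>v n"
    using k HH00 n by (auto simp del: index_mult_mat)
  ultimately show "k \<in> {k. eigenvalue H k}"
    using eigenvalue_if_mult_eq_smult[OF H M _ n] by simp
qed

lemma commuting_sum_square:
  fixes A B :: "'a::comm_ring_1 mat"
  assumes A: "A \<in> carrier_mat n n" and B: "B \<in> carrier_mat n n"
    and AA: "A * A = c \<cdot>\<^sub>m 1\<^sub>m n" and BB: "B * B = c \<cdot>\<^sub>m 1\<^sub>m n" and AB: "A * B = B * A"
  shows "(A + B) * (A + B) = (2 * c) \<cdot>\<^sub>m 1\<^sub>m n + 2 \<cdot>\<^sub>m (A * B)"
proof -
  have "(A + B) * (A + B) = A * A + B * A + (A * B + B * B)"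
    using A B by (simp add: add_mult_distrib_mat[of _ n n] mult_add_distrib_mat[of _ n n])
  then show ?thesis
    unfolding AA BB AB[symmetric] using A B by (intro eq_matI) (auto simp: algebra_simps)
qed

lemma commuting_sum_cube:
  fixes A B :: "'a::comm_ring_1 mat"
  assumes A: "A \<in> carrier_mat n n" and B: "B \<in> carrier_mat n n"
    and AA: "A * A = c \<cdot>\<^sub>m 1\<^sub>m n" and BB: "B * B = c \<cdot>\<^sub>m 1\<^sub>m n" and AB: "A * B = B * A"
  shows "(A + B) * ((A + B) * (A + B)) = (4 * c) \<cdot>\<^sub>m (A + B)"
proof -
  have ABc: "A * B \<in> carrier_mat n n" using A B by simp
  have AAB: "A * (A * B) = c \<cdot>\<^sub>m B"
    using A B by (simp add: assoc_mult_mat[of A n n A n B n, symmetric] AA smult_one_mat_mult)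
  have BAB: "B * (A * B) = c \<cdot>\<^sub>m A"
    using A B by (simp add: AB assoc_mult_mat[of B n n B n A n, symmetric] BB smult_one_mat_mult)
  have AB_sum: "A + B \<in> carrier_mat n n" using A B by simp
  have "(A + B) * ((2 * c) \<cdot>\<^sub>m 1\<^sub>m n + 2 \<cdot>\<^sub>m (A * B))
      = (A + B) * ((2 * c) \<cdot>\<^sub>m 1\<^sub>m n) + (A + B) * (2 \<cdot>\<^sub>m (A * B))"
    using AB_sum ABc by (intro mult_add_distrib_mat) auto
  also have "\<dots> = (2 * c) \<cdot>\<^sub>m (A + B) + 2 \<cdot>\<^sub>m ((A + B) * (A * B))"
    using AB_sum ABc by (simp add: mult_smult_distrib[of _ n n _ n] right_mult_one_mat)
  also have "\<dots> = (2 * c) \<cdot>\<^sub>m (A + B) + 2 \<cdot>\<^sub>m (A * (A * B) + B * (A * B))"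
    using add_mult_distrib_mat[OF A B ABc] by simp
  also have "\<dots> = (4 * c) \<cdot>\<^sub>m (A + B)"
    unfolding AAB BAB using A B by (intro eq_matI) (auto simp: algebra_simps)
  finally show ?thesis using commuting_sum_square[OF assms] by simp
qed

section \<open>Supports of \<open>{0, \<plusminus>\<i>}\<close>-matrices\<close>

fun hamming_weight :: "nat \<Rightarrow> nat" where
  "hamming_weight x = (if x = 0 then 0 else x mod 2 + hamming_weight (x div 2))"

declare hamming_weight.simps [simp del]

lemma hamming_weight_0 [simp]: "hamming_weight 0 = 0"
  by (simp add: hamming_weight.simps)

lemma hamming_weight_add_pow2:
  "x < 2 ^ n \<Longrightarrow> hamming_weight (x + 2 ^ n) = Suc (hamming_weight x)"
proof (induction n arbitrary: x)
  case 0
  then show ?case by (simp add: hamming_weight.simps)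
next
  case (Suc n)
  have "(x + 2 ^ Suc n) div 2 = x div 2 + 2 ^ n" and "x div 2 < 2 ^ n"
    using Suc.prems by auto
  then show ?case
    using Suc.IH[of "x div 2"] hamming_weight.simps[of x] hamming_weight.simps[of "x + 2 ^ Suc n"]
    by (auto simp: add.commute)
qed

lemma hamming_weight_pow2_minus_1: "hamming_weight (2 ^ n - 1) = n"
proof (induction n)
  case (Suc n)
  have "(2::nat) ^ Suc n - 1 = (2 ^ n - 1) + 2 ^ n" by simp
  then show ?case using hamming_weight_add_pow2[of "2 ^ n - 1" n] Suc.IH by simp
qed simp

definition support :: "nat \<Rightarrow> complex mat \<Rightarrow> (nat \<times> nat) set" where
  "support n M = {(u, v). u < n \<and> v < n \<and> M $$ (u, v) \<noteq> 0}"

definition unit_hermitian :: "nat \<Rightarrow> complex mat \<Rightarrow> bool" where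
  "unit_hermitian n M \<longleftrightarrow>
     (\<forall>u<n. \<forall>v<n. M $$ (u, v) \<in> {0, \<i>, - \<i>} \<and> M $$ (v, u) = cnj (M $$ (u, v)))"

definition weight_layered :: "nat \<Rightarrow> complex mat \<Rightarrow> bool" where
  "weight_layered n M \<longleftrightarrow> (\<forall>u v. (u, v) \<in> support n M \<longrightarrow>
     hamming_weight u = Suc (hamming_weight v) \<or> hamming_weight v = Suc (hamming_weight u))"

definition disjoint_support :: "nat \<Rightarrow> complex mat \<Rightarrow> complex mat \<Rightarrow> bool" where
  "disjoint_support n P Q \<longleftrightarrow> support n P \<inter> support n Q = {}"

definition connected_from_0 :: "nat \<Rightarrow> complex mat \<Rightarrow> bool" where
  "connected_from_0 n M \<longleftrightarrow> (\<forall>u<n. (0, u) \<in> (support n M)\<^sup>*)"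

lemma support_zero_mat [simp]: "support n (0\<^sub>m n n) = {}"
  unfolding support_def by simp

lemma support_uminus [simp]: "M \<in> carrier_mat n n \<Longrightarrow> support n (- M) = support n M"
  unfolding support_def by auto

lemma support_add_subset:
  "P \<in> carrier_mat n n \<Longrightarrow> Q \<in> carrier_mat n n \<Longrightarrow> support n (P + Q) \<subseteq> support n P \<union> support n Q"
  unfolding support_def by auto

lemma unit_hermitianD:
  assumes "unit_hermitian n M" "u < n" "v < n"
  shows "M $$ (u, v) \<in> {0, \<i>, - \<i>}" "M $$ (v, u) = cnj (M $$ (u, v))"
  using assms unfolding unit_hermitian_def by blast+

lemma unit_hermitian_uminus:
  assumes "M \<in> carrier_mat n n" "unit_hermitian n M"
  shows "unit_hermitian n (- M)"
  unfolding unit_hermitian_def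
proof (intro allI impI)
  fix u v assume uv: "u < n" "v < n"
  have "(- M) $$ (u, v) = - M $$ (u, v)" "(- M) $$ (v, u) = - M $$ (v, u)"
    using uv assms(1) by auto
  with unit_hermitianD[OF assms(2) uv]
  show "(- M) $$ (u, v) \<in> {0, \<i>, - \<i>} \<and> (- M) $$ (v, u) = cnj ((- M) $$ (u, v))"
    by auto
qed

lemma unit_hermitian_add:
  assumes P: "P \<in> carrier_mat n n" and Q: "Q \<in> carrier_mat n n"
    and hP: "unit_hermitian n P" and hQ: "unit_hermitian n Q" and PQ: "disjoint_support n P Q"
  shows "unit_hermitian n (P + Q)"
  unfolding unit_hermitian_def
proof (intro allI impI)
  fix u v assume u: "u < n" and v: "v < n"
  note P_uv = unit_hermitianD[OF hP u v] and Q_uv = unit_hermitianD[OF hQ u v]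
  have "P $$ (u, v) = 0 \<or> Q $$ (u, v) = 0"
    using PQ u v unfolding disjoint_support_def support_def by blast
  then show "(P + Q) $$ (u, v) \<in> {0, \<i>, - \<i>} \<and> (P + Q) $$ (v, u) = cnj ((P + Q) $$ (u, v))"
    using P_uv Q_uv u v P Q by auto
qed

lemma unit_hermitian_four_block:
  assumes X: "X \<in> carrier_mat n n" and W: "W \<in> carrier_mat n n"
    and hX: "unit_hermitian n X" and hW: "unit_hermitian n W"
    and YZ: "\<And>u v. u < n \<Longrightarrow> v < n \<Longrightarrow> Y $$ (u, v) \<in> {0, \<i>, - \<i>} \<and> Z $$ (v, u) = cnj (Y $$ (u, v))"
  shows "unit_hermitian (n + n) (four_block_mat X Y Z W)"
  unfolding unit_hermitian_def
proof (intro allI impI)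
  fix u v assume u: "u < n + n" and v: "v < n + n"
  note idx = index_four_block_square[OF X W]
  consider "u < n" "v < n" | "u < n" "\<not> v < n" | "\<not> u < n" "v < n" | "\<not> u < n" "\<not> v < n"
    by blast
  then show "four_block_mat X Y Z W $$ (u, v) \<in> {0, \<i>, - \<i>} \<and>
    four_block_mat X Y Z W $$ (v, u) = cnj (four_block_mat X Y Z W $$ (u, v))"
  proof cases
    case 1
    then show ?thesis using idx[OF u v] idx[OF v u] unit_hermitianD[OF hX 1] by simp
  next
    case 2
    then show ?thesis using idx[OF u v] idx[OF v u] YZ[of u "v - n"] v by simp
  next
    case 3
    then have "Y $$ (v, u - n) \<in> {0, \<i>, - \<i>}" "Z $$ (u - n, v) = cnj (Y $$ (v, u - n))"
      using YZ[of v "u - n"] u by auto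
    then show ?thesis using idx[OF u v] idx[OF v u] 3 by auto
  next
    case 4
    then have "u - n < n" "v - n < n" using u v by auto
    then show ?thesis using idx[OF u v] idx[OF v u] unit_hermitianD[OF hW, of "u - n" "v - n"] 4 by simp
  qed
qed

lemma weight_layered_uminus:
  "M \<in> carrier_mat n n \<Longrightarrow> weight_layered n (- M) = weight_layered n M"
  unfolding weight_layered_def by simp

lemma weight_layered_add:
  assumes "P \<in> carrier_mat n n" "Q \<in> carrier_mat n n" "weight_layered n P" "weight_layered n Q"
  shows "weight_layered n (P + Q)"
  using assms(3,4) support_add_subset[OF assms(1,2)] unfolding weight_layered_def by blast

lemma weight_layered_four_block:
  assumes X: "X \<in> carrier_mat (2 ^ k) (2 ^ k)" and W: "W \<in> carrier_mat (2 ^ k) (2 ^ k)"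
    and lX: "weight_layered (2 ^ k) X" and lW: "weight_layered (2 ^ k) W"
    and Y: "\<And>u v. (u, v) \<in> support (2 ^ k) Y \<Longrightarrow> u = v"
    and Z: "\<And>u v. (u, v) \<in> support (2 ^ k) Z \<Longrightarrow> u = v"
  shows "weight_layered (2 ^ k + 2 ^ k) (four_block_mat X Y Z W)"
  unfolding weight_layered_def
proof (intro allI impI)
  let ?w = hamming_weight and ?n = "2 ^ k :: nat"
  fix u v assume "(u, v) \<in> support (?n + ?n) (four_block_mat X Y Z W)"
  then have u: "u < ?n + ?n" and v: "v < ?n + ?n" and nz: "four_block_mat X Y Z W $$ (u, v) \<noteq> 0"
    unfolding support_def by auto
  note entry = nz[unfolded index_four_block_square[OF X W u v]]
  have upper: "?w x = Suc (?w (x - ?n))" if "\<not> x < ?n" "x < ?n + ?n" for x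
    using hamming_weight_add_pow2[of "x - ?n" k] that by simp
  consider "u < ?n" "v < ?n" | "u < ?n" "\<not> v < ?n" | "\<not> u < ?n" "v < ?n" | "\<not> u < ?n" "\<not> v < ?n"
    by blast
  then show "?w u = Suc (?w v) \<or> ?w v = Suc (?w u)"
  proof cases
    case 1
    then have "(u, v) \<in> support ?n X" using entry unfolding support_def by auto
    then show ?thesis using lX unfolding weight_layered_def by blast
  next
    case 2
    then have "u = v - ?n" using entry Y[of u "v - ?n"] v unfolding support_def by auto
    then show ?thesis using upper[of v] 2 v by simp
  next
    case 3
    then have "u - ?n = v" using entry Z[of "u - ?n" v] u unfolding support_def by auto
    then show ?thesis using upper[of u] 3 u by simp
  next
    case 4
    then have "(u - ?n, v - ?n) \<in> support ?n W"
      using entry u v unfolding support_def by auto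
    then have "?w (u - ?n) = Suc (?w (v - ?n)) \<or> ?w (v - ?n) = Suc (?w (u - ?n))"
      using lW unfolding weight_layered_def by blast
    then show ?thesis using upper[of u] upper[of v] 4 u v by simp
  qed
qed

lemma hamming_weight_walk:
  assumes "weight_layered n M"
  shows "(x, y) \<in> support n M ^^ k \<Longrightarrow> hamming_weight y \<le> hamming_weight x + k"
proof (induction k arbitrary: y)
  case (Suc k)
  then obtain z where "(x, z) \<in> support n M ^^ k" and "(z, y) \<in> support n M" by auto
  then show ?case using Suc.IH assms unfolding weight_layered_def by fastforce
qed simp

lemma disjoint_support_double_diag_twist:
  assumes P: "P \<in> carrier_mat n n" and Q: "Q \<in> carrier_mat n n" and QP: "disjoint_support n Q P"
  shows "disjoint_support (n + n) (double_diag n Q) (double_twist n P)"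
  unfolding disjoint_support_def
proof (intro equals0I)
  fix e assume e: "e \<in> support (n + n) (double_diag n Q) \<inter> support (n + n) (double_twist n P)"
  then obtain u v where uv: "e = (u, v)" "u < n + n" "v < n + n"
    and nz: "double_diag n Q $$ (u, v) \<noteq> 0" "double_twist n P $$ (u, v) \<noteq> 0"
    unfolding support_def by auto
  note idxQ = index_four_block_square[OF Q Q uv(2,3), of "0\<^sub>m n n" "0\<^sub>m n n"]
  note idxP = index_four_block_square[OF P uminus_carrier_mat[OF P] uv(2,3)]
  consider "u < n" "v < n" | "\<not> u < n" "\<not> v < n" | "(u < n) \<noteq> (v < n)"
    by blast
  then have "(u mod n, v mod n) \<in> support n Q \<inter> support n P"
  proof cases
    case 1
    then show ?thesis using nz idxQ idxP P unfolding double_diag_def double_twist_def support_def by auto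
  next
    case 2
    then have "u - n < n" "v - n < n" using uv by auto
    then show ?thesis using 2 nz idxQ idxP P
      unfolding double_diag_def double_twist_def support_def by (auto simp: le_mod_geq)
  next
    case 3
    then have "double_diag n Q $$ (u, v) = 0"
      using uv idxQ unfolding double_diag_def by auto
    then show ?thesis using nz(1) by blast
  qed
  then show False using QP unfolding disjoint_support_def by blast
qed

lemma connected_from_0_four_block:
  assumes X: "X \<in> carrier_mat n n" and W: "W \<in> carrier_mat n n"
    and rX: "connected_from_0 n X" and Y: "\<And>u. u < n \<Longrightarrow> Y $$ (u, u) \<noteq> 0"
  shows "connected_from_0 (n + n) (four_block_mat X Y Z W)"
  unfolding connected_from_0_def
proof (intro allI impI)
  let ?M = "four_block_mat X Y Z W"
  fix u assume u: "u < n + n"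
  have "support n X \<subseteq> support (n + n) ?M"
    using X W unfolding support_def by auto
  then have low: "(0, w) \<in> (support (n + n) ?M)\<^sup>*" if "w < n" for w
    using rX that rtrancl_mono unfolding connected_from_0_def by blast
  show "(0, u) \<in> (support (n + n) ?M)\<^sup>*"
  proof (cases "u < n")
    case False
    then have "u - n < n" and "(u - n, u) \<in> support (n + n) ?M"
      using u X W Y[of "u - n"] unfolding support_def by auto
    then show ?thesis using low by (blast intro: rtrancl_into_rtrancl)
  qed (use low in blast)
qed

section \<open>Digraphs with a given Hermitian adjacency matrix\<close>

definition arcs_of :: "nat \<Rightarrow> complex mat \<Rightarrow> (nat \<times> nat) set" where
  "arcs_of n M = {(u, v). u < n \<and> v < n \<and> M $$ (u, v) = \<i>}"

lemma arcs_of_iff_entry: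
  assumes h: "unit_hermitian n M" and u: "u < n" and v: "v < n"
  shows "(u, v) \<in> arcs_of n M \<longleftrightarrow> M $$ (u, v) = \<i>"
    and "(v, u) \<in> arcs_of n M \<longleftrightarrow> M $$ (u, v) = - \<i>"
proof -
  show "(u, v) \<in> arcs_of n M \<longleftrightarrow> M $$ (u, v) = \<i>" using u v unfolding arcs_of_def by simp
  have "cnj (M $$ (u, v)) = \<i> \<longleftrightarrow> M $$ (u, v) = - \<i>"
    by (metis complex_cnj_cnj complex_cnj_i)
  then show "(v, u) \<in> arcs_of n M \<longleftrightarrow> M $$ (u, v) = - \<i>"
    using u v unit_hermitianD(2)[OF h u v] unfolding arcs_of_def by simp
qed

lemma is_digraph_arcs_of:
  assumes h: "unit_hermitian n M"
  shows "is_digraph n (arcs_of n M)"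
  unfolding is_digraph_def
proof (intro conjI allI notI)
  show "arcs_of n M \<subseteq> {0..<n} \<times> {0..<n}" unfolding arcs_of_def by auto
  fix x assume x: "(x, x) \<in> arcs_of n M"
  then have "x < n" "M $$ (x, x) = \<i>" unfolding arcs_of_def by auto
  moreover from x \<open>x < n\<close> have "M $$ (x, x) = - \<i>" using arcs_of_iff_entry(2)[OF h] by blast
  ultimately show False by (simp add: complex_eq_iff)
qed

lemma hermitian_adj_arcs_of:
  assumes M: "M \<in> carrier_mat n n" and h: "unit_hermitian n M"
  shows "hermitian_adj n (arcs_of n M) = M"
proof (rule eq_matI)
  fix u v assume "u < dim_row M" "v < dim_col M"
  then have u: "u < n" and v: "v < n" using M by auto
  have "M $$ (u, v) \<in> {0, \<i>, - \<i>}" using unit_hermitianD(1)[OF h u v] .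
  then show "hermitian_adj n (arcs_of n M) $$ (u, v) = M $$ (u, v)"
    using u v arcs_of_iff_entry[OF h u v] unfolding hermitian_adj_def
    by (auto simp: complex_eq_iff)
qed (use M in \<open>auto simp: hermitian_adj_def\<close>)

lemma underlying_edges_arcs_of:
  assumes h: "unit_hermitian n M"
  shows "underlying_edges (arcs_of n M) = support n M"
proof (rule Set.set_eqI)
  fix e :: "nat \<times> nat"
  obtain u v where e: "e = (u, v)" by fastforce
  show "e \<in> underlying_edges (arcs_of n M) \<longleftrightarrow> e \<in> support n M"
  proof (cases "u < n \<and> v < n")
    case True
    then have u: "u < n" and v: "v < n" by auto
    have "e \<in> underlying_edges (arcs_of n M) \<longleftrightarrow> M $$ (u, v) = \<i> \<or> M $$ (u, v) = - \<i>"
      using arcs_of_iff_entry[OF h u v] unfolding e underlying_edges_def by auto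
    then show ?thesis
      using unit_hermitianD(1)[OF h u v] u v unfolding e support_def by auto
  next
    case False
    then show ?thesis unfolding e underlying_edges_def support_def arcs_of_def by auto
  qed
qed

lemma und_connected_if_reachable_from_0:
  assumes reach: "\<forall>u<n. (0, u) \<in> (underlying_edges A)\<^sup>*"
  shows "und_connected n A"
  unfolding und_connected_def
proof (intro allI impI)
  fix x y assume "x < n" "y < n"
  have "(underlying_edges A)\<inverse> = underlying_edges A"
    unfolding underlying_edges_def by auto
  then have "(x, 0) \<in> (underlying_edges A)\<^sup>*"
    using reach \<open>x < n\<close> rtrancl_converseI[of 0 x "underlying_edges A"] by simp
  then have "(x, y) \<in> (underlying_edges A)\<^sup>*"
    using reach \<open>y < n\<close> by (blast intro: rtrancl_trans)
  then show "\<exists>k. (x, y) \<in> underlying_edges A ^^ k" by (simp add: rtrancl_power)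
qed

lemma und_dist_attained:
  "(x, y) \<in> underlying_edges A ^^ k \<Longrightarrow> (x, y) \<in> underlying_edges A ^^ und_dist A x y"
  unfolding und_dist_def by (rule LeastI)

lemma und_dist_le_und_diameter:
  assumes "x < n" "y < n"
  shows "und_dist A x y \<le> und_diameter n A"
  unfolding und_diameter_def
proof (rule Max_ge)
  have "{und_dist A x y |x y. x < n \<and> y < n} = (\<lambda>(x, y). und_dist A x y) ` ({..<n} \<times> {..<n})"
    by auto
  then show "finite {und_dist A x y |x y. x < n \<and> y < n}" by simp
qed (use assms in blast)

section \<open>The signed hypercube\<close>

text \<open>The roles of the two matrices are swapped at every doubling, so that the scalar
  squares grow alternately.\<close>

fun cube_A :: "nat \<Rightarrow> complex mat" and cube_B :: "nat \<Rightarrow> complex mat" where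
  "cube_A 0 = 0\<^sub>m 1 1"
| "cube_A (Suc n) = double_diag (2 ^ n) (cube_B n)"
| "cube_B 0 = 0\<^sub>m 1 1"
| "cube_B (Suc n) = double_twist (2 ^ n) (cube_A n)"

lemma pow2_Suc_eq_add: "(2::nat) ^ Suc n = 2 ^ n + 2 ^ n"
  by simp

lemma cube_carrier: "cube_A n \<in> carrier_mat (2 ^ n) (2 ^ n) \<and> cube_B n \<in> carrier_mat (2 ^ n) (2 ^ n)"
  by (induction n) (auto simp del: power_Suc simp: pow2_Suc_eq_add)

lemma cube_A_carrier [simp]: "cube_A n \<in> carrier_mat (2 ^ n) (2 ^ n)"
  and cube_B_carrier [simp]: "cube_B n \<in> carrier_mat (2 ^ n) (2 ^ n)"
  using cube_carrier by blast+

lemma cube_squares: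
  "cube_A n * cube_A n = of_nat (n div 2) \<cdot>\<^sub>m 1\<^sub>m (2 ^ n) \<and>
   cube_B n * cube_B n = of_nat (Suc n div 2) \<cdot>\<^sub>m 1\<^sub>m (2 ^ n)"
proof (induction n)
  case (Suc n)
  have "of_nat (n div 2) + 1 = (of_nat (Suc (Suc n) div 2) :: complex)" by simp
  then show ?case
    using Suc double_diag_square[OF cube_B_carrier] double_twist_square[OF cube_A_carrier]
    by (simp del: power_Suc add: pow2_Suc_eq_add add.commute)
qed (intro conjI eq_matI; simp)

lemma cube_products:
  "cube_A n * cube_B n = cube_B n * cube_A n \<and> (\<forall>u < 2 ^ n. (cube_A n * cube_B n) $$ (u, u) = 0)"
proof (induction n)
  case (Suc n)
  let ?A = "cube_A n" and ?B = "cube_B n" and ?N = "2 ^ n :: nat"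
  have BA: "?B * ?A \<in> carrier_mat ?N ?N" using mult_carrier_mat[OF cube_B_carrier cube_A_carrier] .
  have "cube_A (Suc n) * cube_B (Suc n) = four_block_mat (?B * ?A) (\<i> \<cdot>\<^sub>m ?B) ((- \<i>) \<cdot>\<^sub>m ?B) (- (?B * ?A))"
    by (simp del: power_Suc add: double_diag_mult_double_twist)
  moreover have "cube_B (Suc n) * cube_A (Suc n) = four_block_mat (?B * ?A) (\<i> \<cdot>\<^sub>m ?B) ((- \<i>) \<cdot>\<^sub>m ?B) (- (?B * ?A))"
    using Suc by (simp del: power_Suc add: double_twist_mult_double_diag)
  moreover have "four_block_mat (?B * ?A) (\<i> \<cdot>\<^sub>m ?B) ((- \<i>) \<cdot>\<^sub>m ?B) (- (?B * ?A)) $$ (u, u) = 0"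
    if "u < 2 ^ Suc n" for u
  proof -
    have diag: "(?B * ?A) $$ (w, w) = 0" if "w < ?N" for w
      using Suc that by metis
    have u: "u < ?N + ?N" using that by simp
    note entry = index_four_block_square[OF BA uminus_carrier_mat[OF BA] u u]
    show ?thesis
    proof (cases "u < ?N")
      case False
      then have "u - ?N < ?N" using u by simp
      then show ?thesis using False entry diag
        by (simp add: carrier_matD[OF BA] del: index_mult_mat)
    qed (use entry diag in simp)
  qed
  ultimately show ?case by simp
qed simp

lemma cube_unit_hermitian: "unit_hermitian (2 ^ n) (cube_A n) \<and> unit_hermitian (2 ^ n) (cube_B n)"
proof (induction n)
  case 0
  show ?case unfolding unit_hermitian_def by auto
next
  case (Suc n)
  let ?A = "cube_A n" and ?B = "cube_B n" and ?N = "2 ^ n :: nat"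
  have "unit_hermitian (?N + ?N) (double_diag ?N ?B)"
    unfolding double_diag_def using Suc by (intro unit_hermitian_four_block) auto
  moreover have "unit_hermitian (?N + ?N) (double_twist ?N ?A)"
    unfolding double_twist_def using Suc
    by (intro unit_hermitian_four_block unit_hermitian_uminus) auto
  ultimately show ?case by (simp del: power_Suc add: pow2_Suc_eq_add)
qed

lemma cube_weight_layered: "weight_layered (2 ^ n) (cube_A n) \<and> weight_layered (2 ^ n) (cube_B n)"
proof (induction n)
  case 0
  show ?case unfolding weight_layered_def by simp
next
  case (Suc n)
  let ?A = "cube_A n" and ?B = "cube_B n" and ?N = "2 ^ n :: nat"
  have "weight_layered (?N + ?N) (double_diag ?N ?B)"
    unfolding double_diag_def using Suc
    by (intro weight_layered_four_block) (auto simp: support_def)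
  moreover have "weight_layered (?N + ?N) (double_twist ?N ?A)"
    unfolding double_twist_def using Suc
    by (intro weight_layered_four_block) (auto simp: support_def weight_layered_uminus split: if_splits)
  ultimately show ?case by (simp del: power_Suc add: pow2_Suc_eq_add)
qed

lemma cube_disjoint_support: "disjoint_support (2 ^ n) (cube_A n) (cube_B n)"
proof (induction n)
  case 0
  show ?case unfolding disjoint_support_def by simp
next
  case (Suc n)
  then have "disjoint_support (2 ^ n) (cube_B n) (cube_A n)"
    unfolding disjoint_support_def by blast
  then show ?case
    using disjoint_support_double_diag_twist[OF cube_A_carrier cube_B_carrier]
    by (simp del: power_Suc add: pow2_Suc_eq_add)
qed

definition cube_mat :: "nat \<Rightarrow> complex mat" where
  "cube_mat n = cube_A n + cube_B n"

lemma cube_mat_carrier [simp]: "cube_mat n \<in> carrier_mat (2 ^ n) (2 ^ n)"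
  unfolding cube_mat_def by simp

lemma cube_mat_connected_from_0: "connected_from_0 (2 ^ n) (cube_mat n)"
proof (induction n)
  case 0
  show ?case unfolding connected_from_0_def by simp
next
  case (Suc n)
  let ?A = "cube_A n" and ?B = "cube_B n" and ?N = "2 ^ n :: nat"
  have "cube_mat (Suc n) = four_block_mat (?B + ?A) (\<i> \<cdot>\<^sub>m 1\<^sub>m ?N) ((- \<i>) \<cdot>\<^sub>m 1\<^sub>m ?N) (?B + - ?A)"
    unfolding cube_mat_def
    by (simp del: power_Suc add: double_diag_def double_twist_def add_four_block_mat[of _ ?N ?N _ ?N _ ?N])
  moreover have "connected_from_0 ?N (?B + ?A)"
    using Suc unfolding cube_mat_def by (simp add: comm_add_mat[of ?A ?N ?N])
  ultimately have "connected_from_0 (?N + ?N) (cube_mat (Suc n))"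
    by (simp del: power_Suc) (rule connected_from_0_four_block; simp)
  then show ?case by (simp del: power_Suc add: pow2_Suc_eq_add)
qed

lemma cube_mat_unit_hermitian: "unit_hermitian (2 ^ n) (cube_mat n)"
  unfolding cube_mat_def using cube_unit_hermitian cube_disjoint_support
  by (intro unit_hermitian_add) auto

lemma cube_mat_weight_layered: "weight_layered (2 ^ n) (cube_mat n)"
  unfolding cube_mat_def using cube_weight_layered by (intro weight_layered_add) auto

lemma cube_mat_eigenvalues:
  assumes "even n" "0 < n"
  defines "s \<equiv> complex_of_real (sqrt (2 * n))"
  shows "{k. eigenvalue (cube_mat n) k} = {0, s, - s}"
proof (rule eigenvalues_of_cubic)
  let ?A = "cube_A n" and ?B = "cube_B n" and ?c = "of_nat (n div 2) :: complex"
  have AA: "?A * ?A = ?c \<cdot>\<^sub>m 1\<^sub>m (2 ^ n)" and BB: "?B * ?B = ?c \<cdot>\<^sub>m 1\<^sub>m (2 ^ n)"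
    using cube_squares[of n] \<open>even n\<close> by auto
  have AB: "?A * ?B = ?B * ?A" and AB00: "(?A * ?B) $$ (0, 0) = 0"
    using cube_products[of n] by auto
  obtain m where m: "n = 2 * m" using \<open>even n\<close> by (rule evenE)
  have "s * s = of_real (2 * real n)" unfolding s_def by (simp flip: of_real_mult)
  also have "\<dots> = 4 * ?c" using m by simp
  finally have ss: "s * s = 4 * ?c" .
  show "cube_mat n \<in> carrier_mat (2 ^ n) (2 ^ n)" "0 < (2::nat) ^ n" by simp_all
  show "cube_mat n * (cube_mat n * cube_mat n) = (s * s) \<cdot>\<^sub>m cube_mat n"
    unfolding ss cube_mat_def by (rule commuting_sum_cube[OF _ _ AA BB AB]) simp_all
  have "(cube_mat n * cube_mat n) $$ (0, 0) = 2 * ?c"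
    unfolding cube_mat_def commuting_sum_square[OF cube_A_carrier cube_B_carrier AA BB AB]
    using AB00 carrier_matD[OF mult_carrier_mat[OF cube_A_carrier cube_B_carrier]]
    by (simp del: index_mult_mat)
  then show "(cube_mat n * cube_mat n) $$ (0, 0) \<notin> {0, s * s}"
    using assms(1,2) unfolding ss by auto
  have "cube_mat n $$ (0, 0) \<in> {0, \<i>, - \<i>}" "cube_mat n $$ (0, 0) = cnj (cube_mat n $$ (0, 0))"
    using unit_hermitianD[OF cube_mat_unit_hermitian, of 0 n 0] by simp_all
  then show "cube_mat n $$ (0, 0) = 0" by (auto simp: complex_eq_iff)
qed

abbreviation cube_arcs :: "nat \<Rightarrow> (nat \<times> nat) set" where
  "cube_arcs n \<equiv> arcs_of (2 ^ n) (cube_mat n)"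

lemma cube_arcs_und_connected: "und_connected (2 ^ n) (cube_arcs n)"
  using cube_mat_connected_from_0
  unfolding connected_from_0_def underlying_edges_arcs_of[OF cube_mat_unit_hermitian, symmetric]
  by (rule und_connected_if_reachable_from_0)

lemma cube_arcs_und_diameter: "n \<le> und_diameter (2 ^ n) (cube_arcs n)"
proof -
  let ?A = "cube_arcs n" and ?far = "2 ^ n - 1 :: nat"
  have E: "underlying_edges ?A = support (2 ^ n) (cube_mat n)"
    by (rule underlying_edges_arcs_of[OF cube_mat_unit_hermitian])
  obtain k where "(0, ?far) \<in> underlying_edges ?A ^^ k"
    using cube_arcs_und_connected unfolding und_connected_def by force
  then have "(0, ?far) \<in> support (2 ^ n) (cube_mat n) ^^ und_dist ?A 0 ?far"
    using und_dist_attained E by metis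
  then have "n \<le> und_dist ?A 0 ?far"
    using hamming_weight_walk[OF cube_mat_weight_layered] hamming_weight_pow2_minus_1[of n] by fastforce
  also have "\<dots> \<le> und_diameter (2 ^ n) ?A"
    by (rule und_dist_le_und_diameter) simp_all
  finally show ?thesis .
qed

lemma cube_arcs_card_eigenvalues:
  assumes "even n" "0 < n"
  shows "card {k. eigenvalue (hermitian_adj (2 ^ n) (cube_arcs n)) k} = 3"
proof -
  let ?s = "complex_of_real (sqrt (2 * n))"
  have "?s \<noteq> 0" using \<open>0 < n\<close> by simp
  then show ?thesis
    using cube_mat_eigenvalues[OF assms]
    by (simp add: hermitian_adj_arcs_of cube_mat_unit_hermitian complex_eq_iff)
qed

theorem corollary7p3:
  shows "\<exists>X :: nat \<Rightarrow> nat \<times> (nat \<times> nat) set.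
     (\<forall>j. is_digraph (fst (X j)) (snd (X j))
          \<and> und_connected (fst (X j)) (snd (X j))
          \<and> card {ev. eigenvalue (hermitian_adj (fst (X j)) (snd (X j))) ev} = 3)
     \<and> filterlim (\<lambda>j. und_diameter (fst (X j)) (snd (X j))) at_top sequentially"
proof -
  define X :: "nat \<Rightarrow> nat \<times> (nat \<times> nat) set"
    where "X j = (2 ^ (2 * j + 2), cube_arcs (2 * j + 2))" for j
  have "is_digraph (fst (X j)) (snd (X j)) \<and> und_connected (fst (X j)) (snd (X j))
      \<and> card {ev. eigenvalue (hermitian_adj (fst (X j)) (snd (X j))) ev} = 3" for j
    unfolding X_def
    by (simp add: is_digraph_arcs_of cube_mat_unit_hermitian cube_arcs_und_connected
        cube_arcs_card_eigenvalues del: power_Suc)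
  moreover have "filterlim (\<lambda>j. und_diameter (fst (X j)) (snd (X j))) at_top sequentially"
  proof (rule filterlim_at_top_mono[OF filterlim_ident])
    have "j \<le> und_diameter (fst (X j)) (snd (X j))" for j
      using cube_arcs_und_diameter[of "2 * j + 2"] unfolding X_def fst_conv snd_conv by linarith
    then show "\<forall>\<^sub>F j in sequentially. j \<le> und_diameter (fst (X j)) (snd (X j))"
      by (simp add: always_eventually)
  qed
  ultimately show ?thesis by blast
qed

end
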